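(* Let $W(x)=(x^2-1)^2$ and let $u_0\in\mathcal V$ satisfy $(u_0)_i\ne0$ for all $i\in V$. For $\varepsilon>0$, let $u^\varepsilon(t)$ be the solution of $$\dot u_i=-(\Delta u)_i-\frac1\varepsilon d_i^{-r}W'(u_i)\ (t>0),\qquad u(0)=u_0.$$ Then there exists $\varepsilon_0>0$, depending only on the graph, on $r$ and on $u_0$, such that for every $\varepsilon\in(0,\varepsilon_0]$ and every $i\in V$, $\operatorname{sign}(u^\varepsilon_i(t))=\operatorname{sign}((u_0)_i)$ for all $t\ge0$.
   Context: $G=(V,E)$ is a finite undirected weighted graph with vertex set $V=\{1,\dots,n\}$. The weights satisfy $\omega_{ij}=\omega_{ji}\ge0$, with $\omega_{ij}>0$ iff $\{i,j\}\in E$, and $\omega_{ii}=0$. The degrees are $d_i=\sum_j\omega_{ij}>0$. A parameter $r\in[0,1]$ is fixed. $\mathcal V$ is the space of functions $V\to\mathbb R$. The graph Laplacian is $(\Delta u)_i=d_i^{-r}\sum_j\omega_{ij}(u_i-u_j)$. *)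

theory Defs
  imports "HOL-Analysis.Analysis"
begin

definition weighted_graph :: "nat \<Rightarrow> (nat \<Rightarrow> nat \<Rightarrow> real) \<Rightarrow> bool" where
  "weighted_graph n w \<longleftrightarrow>
     (\<forall>i\<in>{1..n}. \<forall>j\<in>{1..n}. w i j = w j i \<and> w i j \<ge> 0) \<and>
     (\<forall>i\<in>{1..n}. w i i = 0) \<and>
     (\<forall>i\<in>{1..n}. (\<Sum>j\<in>{1..n}. w i j) > 0)"

definition degree :: "nat \<Rightarrow> (nat \<Rightarrow> nat \<Rightarrow> real) \<Rightarrow> nat \<Rightarrow> real" where
  "degree n w i = (\<Sum>j\<in>{1..n}. w i j)"

definition graph_laplacian ::
  "nat \<Rightarrow> (nat \<Rightarrow> nat \<Rightarrow> real) \<Rightarrow> real \<Rightarrow> (nat \<Rightarrow> real) \<Rightarrow> nat \<Rightarrow> real" where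
  "graph_laplacian n w r u i =
     degree n w i powr (- r) * (\<Sum>j\<in>{1..n}. w i j * (u i - u j))"

definition W :: "real \<Rightarrow> real" where
  "W x = (x\<^sup>2 - 1)\<^sup>2"

definition is_AC_solution ::
  "nat \<Rightarrow> (nat \<Rightarrow> nat \<Rightarrow> real) \<Rightarrow> real \<Rightarrow> real \<Rightarrow> (nat \<Rightarrow> real) \<Rightarrow> (real \<Rightarrow> nat \<Rightarrow> real) \<Rightarrow> bool" where
  "is_AC_solution n w r \<epsilon> u0 u \<longleftrightarrow>
     (\<forall>i\<in>{1..n}. u 0 i = u0 i) \<and>
     (\<forall>i\<in>{1..n}. continuous_on {0..} (\<lambda>t. u t i)) \<and>
     (\<forall>t>0. \<forall>i\<in>{1..n}.
        ((\<lambda>s. u s i) has_real_derivative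
           (- graph_laplacian n w r (u t) i
            - (1 / \<epsilon>) * degree n w i powr (- r) * deriv W (u t i))) (at t))"

end

theory Submission imports Defs begin

(* Flip every coordinate by the sign of its initial value,
   f_j(t) = sgn((u0)_j) u_j(t).  We show that for suitable constants
   0 < delta <= 1/2 < 1 < M with delta < |(u0)_j| < M the box
   delta < f_j < M is never left, which keeps every sign fixed.
   At a first exit time T some f_i(T) sits on the boundary while all f_j(T)
   are still in the closed box, so |u_j(T)| <= M.  On the upper face
   the Laplacian term is harmless and the double-well term -W'(M)/eps < 0
   pushes back; on the lower face the double-well term contributes at least
   3 delta/eps, which beats the Laplacian term d_i (delta + M) once
   eps <= delta / (d_max (delta + M)).  This contradicts the sign of the
   one-sided derivative at T. *)

lemma first_exit_time:
  fixes f :: "'i \<Rightarrow> real \<Rightarrow> real"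
  assumes fin: "finite I"
    and cont: "\<forall>j\<in>I. continuous_on {0..} (f j)"
    and init: "\<forall>j\<in>I. \<delta> < f j 0 \<and> f j 0 < M"
    and exit: "t0 \<ge> 0" "j0 \<in> I" "\<not> (\<delta> < f j0 t0 \<and> f j0 t0 < M)"
  obtains T i where "T > 0" "i \<in> I" "f i T = \<delta> \<or> f i T = M"
    "\<forall>t\<in>{0..<T}. \<forall>j\<in>I. \<delta> < f j t \<and> f j t < M"
    "\<forall>j\<in>I. \<delta> \<le> f j T \<and> f j T \<le> M"
proof -
  define S where "S = (\<Union>j\<in>I. {t\<in>{0..}. f j t \<le> \<delta>} \<union> {t\<in>{0..}. M \<le> f j t})"
  have "closed S" unfolding S_def
  proof (intro closed_UN fin ballI closed_Un)
    fix j assume "j \<in> I"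
    then have fj: "continuous_on {0..} (f j)" using cont by blast
    show "closed {t\<in>{0..}. f j t \<le> \<delta>}"
      by (rule continuous_on_closed_Collect_le[OF fj continuous_on_const closed_atLeast])
    show "closed {t\<in>{0..}. M \<le> f j t}"
      by (rule continuous_on_closed_Collect_le[OF continuous_on_const fj closed_atLeast])
  qed
  moreover have bdd: "bdd_below S" unfolding S_def bdd_below_def by auto
  moreover have "t0 \<in> S" using exit unfolding S_def by (force simp: not_less)
  ultimately have TS: "Inf S \<in> S" using closed_contains_Inf by blast
  define T where "T = Inf S"
  have inside: "\<forall>t\<in>{0..<T}. \<forall>j\<in>I. \<delta> < f j t \<and> f j t < M"
  proof (intro ballI)
    fix t j assume "t \<in> {0..<T}" "j \<in> I"
    moreover from \<open>t \<in> {0..<T}\<close> have "t \<notin> S" using cInf_lower[OF _ bdd] unfolding T_def by force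
    ultimately show "\<delta> < f j t \<and> f j t < M" unfolding S_def by auto
  qed
  have "T \<ge> 0" "T \<noteq> 0" using TS init unfolding S_def T_def by auto
  then have Tpos: "T > 0" by simp
  have closed_box: "\<delta> \<le> f j T \<and> f j T \<le> M" if "j \<in> I" for j
  proof -
    have "isCont (f j) T"
      using cont that Tpos by (intro continuous_on_interior[of "{0..}"]) auto
    then have lim: "(f j \<longlongrightarrow> f j T) (at_left T)"
      by (simp add: isCont_def filterlim_at_split)
    have ev: "eventually (\<lambda>t. \<delta> < f j t \<and> f j t < M) (at_left T)"
      using eventually_at_left_real[OF Tpos] by eventually_elim (use inside that in auto)
    have "\<delta> \<le> f j T"
      by (rule tendsto_lowerbound[OF lim]) (use ev in \<open>auto elim: eventually_mono\<close>)
    moreover have "f j T \<le> M"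
      by (rule tendsto_upperbound[OF lim]) (use ev in \<open>auto elim: eventually_mono\<close>)
    ultimately show ?thesis by simp
  qed
  obtain i where "i \<in> I" "f i T \<le> \<delta> \<or> M \<le> f i T" using TS unfolding S_def T_def by auto
  with closed_box have "f i T = \<delta> \<or> f i T = M" by force
  with that Tpos \<open>i \<in> I\<close> inside closed_box show ?thesis by blast
qed

lemma smaller_value_before:
  fixes g :: "real \<Rightarrow> real"
  assumes "(g has_real_derivative D) (at T)" "D > 0" "T > 0"
  obtains t where "t \<in> {0..<T}" "g t < g T"
proof -
  obtain d where d: "d > 0" "\<forall>h>0. h < d \<longrightarrow> g (T - h) < g T"
    using DERIV_pos_inc_left[OF assms(1,2)] by blast
  define h where "h = min (d/2) (T/2)"
  have "h > 0" "h < d" "T - h \<in> {0..<T}" using d assms(3) unfolding h_def by auto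
  with d that show ?thesis by blast
qed

lemma trapping_region:
  fixes f D :: "'i \<Rightarrow> real \<Rightarrow> real"
  assumes fin: "finite I"
    and cont: "\<forall>j\<in>I. continuous_on {0..} (f j)"
    and init: "\<forall>j\<in>I. \<delta> < f j 0 \<and> f j 0 < M"
    and der: "\<forall>t>0. \<forall>j\<in>I. (f j has_real_derivative D j t) (at t)"
    and lower: "\<forall>t>0. \<forall>i\<in>I. (\<forall>j\<in>I. \<delta> \<le> f j t \<and> f j t \<le> M) \<longrightarrow> f i t = \<delta> \<longrightarrow> D i t > 0"
    and upper: "\<forall>t>0. \<forall>i\<in>I. (\<forall>j\<in>I. \<delta> \<le> f j t \<and> f j t \<le> M) \<longrightarrow> f i t = M \<longrightarrow> D i t < 0"
  shows "\<forall>t\<ge>0. \<forall>j\<in>I. \<delta> < f j t \<and> f j t < M"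
proof (rule ccontr)
  assume "\<not> ?thesis"
  then obtain t0 j0 where "t0 \<ge> 0" "j0 \<in> I" "\<not> (\<delta> < f j0 t0 \<and> f j0 t0 < M)" by auto
  then obtain T i where T: "T > 0" "i \<in> I" "f i T = \<delta> \<or> f i T = M"
    and inside: "\<forall>t\<in>{0..<T}. \<forall>j\<in>I. \<delta> < f j t \<and> f j t < M"
    and box: "\<forall>j\<in>I. \<delta> \<le> f j T \<and> f j T \<le> M"
    using first_exit_time[OF fin cont init] by metis
  have dT: "(f i has_real_derivative D i T) (at T)" using der T by blast
  show False
  proof (cases "f i T = \<delta>")
    case True
    then have "D i T > 0" using lower T box by blast
    then obtain t where "t \<in> {0..<T}" "f i t < f i T"
      using smaller_value_before[OF dT _ \<open>T > 0\<close>] by blast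
    then show False using inside T(2) True by fastforce
  next
    case False
    then have "f i T = M" "- D i T > 0" using T upper box by auto
    then obtain t where "t \<in> {0..<T}" "- f i t < - f i T"
      using smaller_value_before[OF DERIV_minus[OF dT] _ \<open>T > 0\<close>] by blast
    then show False using inside T(2) \<open>f i T = M\<close> by fastforce
  qed
qed

definition AC_field ::
  "nat \<Rightarrow> (nat \<Rightarrow> nat \<Rightarrow> real) \<Rightarrow> real \<Rightarrow> real \<Rightarrow> (nat \<Rightarrow> real) \<Rightarrow> nat \<Rightarrow> real" where
  "AC_field n w r \<epsilon> v i =
     - graph_laplacian n w r v i - (1 / \<epsilon>) * degree n w i powr (- r) * deriv W (v i)"

lemma deriv_W: "deriv W x = 4 * x * (x\<^sup>2 - 1)"
proof -
  have "(W has_real_derivative 2 * (x\<^sup>2 - 1) * (2 * x)) (at x)"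
    unfolding W_def[abs_def] by (auto intro!: derivative_eq_intros)
  then show ?thesis by (simp add: DERIV_imp_deriv algebra_simps)
qed

text \<open>W' is odd, so a sign flip \<sigma> commutes with it.\<close>

lemma signed_deriv_W:
  fixes \<sigma> :: real
  assumes "\<bar>\<sigma>\<bar> = 1"
  shows "\<sigma> * deriv W x = 4 * (\<sigma> * x) * ((\<sigma> * x)\<^sup>2 - 1)"
proof -
  have "\<sigma>\<^sup>2 = 1" using assms by (metis abs_1 power2_abs power_one)
  then show ?thesis unfolding deriv_W by (simp add: power_mult_distrib algebra_simps)
qed

lemma signed_laplacian_sum_bounds:
  fixes \<sigma> M :: real and v :: "nat \<Rightarrow> real"
  assumes nonneg: "\<forall>j\<in>J. 0 \<le> w i j" and "\<bar>\<sigma>\<bar> \<le> 1" and bound: "\<forall>j\<in>J. \<bar>v j\<bar> \<le> M"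
  shows "\<sigma> * (\<Sum>j\<in>J. w i j * (v i - v j)) \<le> (\<Sum>j\<in>J. w i j) * (\<sigma> * v i + M)"
    and "(\<Sum>j\<in>J. w i j) * (\<sigma> * v i - M) \<le> \<sigma> * (\<Sum>j\<in>J. w i j * (v i - v j))"
proof -
  have flip: "\<sigma> * (\<Sum>j\<in>J. w i j * (v i - v j)) = (\<Sum>j\<in>J. w i j * (\<sigma> * v i - \<sigma> * v j))"
    by (simp add: sum_distrib_left algebra_simps)
  have small: "\<bar>\<sigma> * v j\<bar> \<le> M" if "j \<in> J" for j
  proof -
    have "\<bar>\<sigma>\<bar> * \<bar>v j\<bar> \<le> 1 * \<bar>v j\<bar>" using \<open>\<bar>\<sigma>\<bar> \<le> 1\<close> by (intro mult_right_mono) auto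
    moreover have "\<bar>v j\<bar> \<le> M" using bound that by blast
    ultimately show ?thesis by (simp add: abs_mult)
  qed
  show "\<sigma> * (\<Sum>j\<in>J. w i j * (v i - v j)) \<le> (\<Sum>j\<in>J. w i j) * (\<sigma> * v i + M)"
    unfolding flip sum_distrib_right
    using nonneg small by (intro sum_mono mult_left_mono) (auto simp: abs_le_iff)
  show "(\<Sum>j\<in>J. w i j) * (\<sigma> * v i - M) \<le> \<sigma> * (\<Sum>j\<in>J. w i j * (v i - v j))"
    unfolding flip sum_distrib_right
    using nonneg small by (intro sum_mono mult_left_mono) (auto simp: abs_le_iff)
qed

lemma signed_AC_field:
  fixes \<sigma> :: real
  assumes "\<bar>\<sigma>\<bar> = 1"
  shows "\<sigma> * AC_field n w r \<epsilon> v i = degree n w i powr (- r) *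
           (- (\<sigma> * (\<Sum>j\<in>{1..n}. w i j * (v i - v j)))
            + (4 * (\<sigma> * v i) * (1 - (\<sigma> * v i)\<^sup>2)) / \<epsilon>)"
proof -
  have "\<sigma> * AC_field n w r \<epsilon> v i = degree n w i powr (- r) *
          (- (\<sigma> * (\<Sum>j\<in>{1..n}. w i j * (v i - v j))) - (\<sigma> * deriv W (v i)) / \<epsilon>)"
    unfolding AC_field_def graph_laplacian_def by (simp add: algebra_simps)
  moreover have "\<sigma> * deriv W (v i) = - (4 * (\<sigma> * v i) * (1 - (\<sigma> * v i)\<^sup>2))"
    unfolding signed_deriv_W[OF assms] by (simp add: algebra_simps)
  ultimately show ?thesis by simp
qed

lemma degree_pos: "weighted_graph n w \<Longrightarrow> i \<in> {1..n} \<Longrightarrow> degree n w i > 0"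
  unfolding weighted_graph_def degree_def by blast

text \<open>Lower face: at a vertex where the flipped value equals a small \<delta>,
  the double-well force beats the diffusion, provided \<epsilon> is small
  relative to the degree.\<close>

lemma AC_field_inward_lower:
  fixes \<sigma> \<delta> M \<epsilon> :: real
  assumes wg: "weighted_graph n w" and i: "i \<in> {1..n}" and "\<bar>\<sigma>\<bar> = 1"
    and bound: "\<forall>j\<in>{1..n}. \<bar>v j\<bar> \<le> M" and face: "\<sigma> * v i = \<delta>"
    and "0 < \<delta>" "\<delta> \<le> 1/2" "0 < \<epsilon>"
    and small: "\<epsilon> * degree n w i * (\<delta> + M) \<le> \<delta>"
  shows "\<sigma> * AC_field n w r \<epsilon> v i > 0"
proof -
  have "\<forall>j\<in>{1..n}. 0 \<le> w i j" using wg i unfolding weighted_graph_def by blast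
  then have diffusion: "\<sigma> * (\<Sum>j\<in>{1..n}. w i j * (v i - v j)) \<le> degree n w i * (\<delta> + M)"
    using signed_laplacian_sum_bounds(1)[of _ w i \<sigma> v M] \<open>\<bar>\<sigma>\<bar> = 1\<close> bound face
    unfolding degree_def by auto
  also have "\<dots> \<le> \<delta> / \<epsilon>"
    using small \<open>0 < \<epsilon>\<close> by (simp add: pos_le_divide_eq mult.commute mult.left_commute)
  also have "\<dots> < (4 * \<delta> * (1 - \<delta>\<^sup>2)) / \<epsilon>"
  proof -
    have "\<delta>\<^sup>2 \<le> 1/4"
      using \<open>0 < \<delta>\<close> \<open>\<delta> \<le> 1/2\<close> power_mono[of \<delta> "1/2" 2] by (simp add: power_divide)
    then have "\<delta> < 4 * \<delta> * (1 - \<delta>\<^sup>2)" using \<open>0 < \<delta>\<close> by (simp add: algebra_simps)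
    then show ?thesis using \<open>0 < \<epsilon>\<close> by (simp add: divide_strict_right_mono)
  qed
  finally show ?thesis
    unfolding signed_AC_field[OF \<open>\<bar>\<sigma>\<bar> = 1\<close>] face using degree_pos[OF wg i] by simp
qed

text \<open>Upper face: at a vertex where the flipped value equals the global bound
  M > 1, diffusion and double-well force both point inward.\<close>

lemma AC_field_inward_upper:
  fixes \<sigma> M \<epsilon> :: real
  assumes wg: "weighted_graph n w" and i: "i \<in> {1..n}" and "\<bar>\<sigma>\<bar> = 1"
    and bound: "\<forall>j\<in>{1..n}. \<bar>v j\<bar> \<le> M" and face: "\<sigma> * v i = M"
    and "1 < M" "0 < \<epsilon>"
  shows "\<sigma> * AC_field n w r \<epsilon> v i < 0"
proof -
  have "\<forall>j\<in>{1..n}. 0 \<le> w i j" using wg i unfolding weighted_graph_def by blast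
  then have "0 \<le> \<sigma> * (\<Sum>j\<in>{1..n}. w i j * (v i - v j))"
    using signed_laplacian_sum_bounds(2)[of _ w i \<sigma> v M] \<open>\<bar>\<sigma>\<bar> = 1\<close> bound face by auto
  moreover have "1 < M\<^sup>2" using \<open>1 < M\<close> by (simp add: less_1_mult power2_eq_square)
  then have "(4 * M * (1 - M\<^sup>2)) / \<epsilon> < 0"
    using \<open>1 < M\<close> \<open>0 < \<epsilon>\<close> by (simp add: divide_neg_pos mult_pos_neg)
  ultimately show ?thesis
    unfolding signed_AC_field[OF \<open>\<bar>\<sigma>\<bar> = 1\<close>] face
    using degree_pos[OF wg i] by (simp add: mult_pos_neg)
qed

lemma AC_solution_trapped:
  fixes \<delta> M \<epsilon> :: real
  assumes wg: "weighted_graph n w" and sol: "is_AC_solution n w r \<epsilon> u0 u"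
    and "0 < \<delta>" "\<delta> \<le> 1/2" "1 < M" "0 < \<epsilon>"
    and small: "\<forall>i\<in>{1..n}. \<epsilon> * degree n w i * (\<delta> + M) \<le> \<delta>"
    and init: "\<forall>j\<in>{1..n}. \<delta> < \<bar>u0 j\<bar> \<and> \<bar>u0 j\<bar> < M"
  shows "\<forall>t\<ge>0. \<forall>j\<in>{1..n}. \<delta> < sgn (u0 j) * u t j \<and> sgn (u0 j) * u t j < M"
proof (rule trapping_region[where D = "\<lambda>j t. sgn (u0 j) * AC_field n w r \<epsilon> (u t) j"])
  note solD = sol[unfolded is_AC_solution_def]
  have sgn1: "\<bar>sgn (u0 j)\<bar> = 1" if "j \<in> {1..n}" for j
  proof -
    have "u0 j \<noteq> 0" using init that \<open>0 < \<delta>\<close> by fastforce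
    then show ?thesis by (simp add: sgn_real_def)
  qed
  have bound: "\<forall>j\<in>{1..n}. \<bar>u t j\<bar> \<le> M"
    if "\<forall>j\<in>{1..n}. \<delta> \<le> sgn (u0 j) * u t j \<and> sgn (u0 j) * u t j \<le> M" for t
  proof
    fix j assume "j \<in> {1..n}"
    then have "\<bar>sgn (u0 j) * u t j\<bar> \<le> M" using that \<open>0 < \<delta>\<close> by fastforce
    then show "\<bar>u t j\<bar> \<le> M" by (metis abs_mult mult_1 sgn1[OF \<open>j \<in> {1..n}\<close>])
  qed
  show "finite {1..n}" by simp
  show "\<forall>j\<in>{1..n}. continuous_on {0..} (\<lambda>t. sgn (u0 j) * u t j)"
    using solD by (simp add: continuous_on_mult_left)
  show "\<forall>j\<in>{1..n}. \<delta> < sgn (u0 j) * u 0 j \<and> sgn (u0 j) * u 0 j < M"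
    using solD init by (simp add: abs_sgn mult.commute)
  show "\<forall>t>0. \<forall>j\<in>{1..n}. ((\<lambda>t. sgn (u0 j) * u t j) has_real_derivative
          sgn (u0 j) * AC_field n w r \<epsilon> (u t) j) (at t)"
    using solD unfolding AC_field_def by (auto intro!: DERIV_cmult)
  show "\<forall>t>0. \<forall>i\<in>{1..n}. (\<forall>j\<in>{1..n}. \<delta> \<le> sgn (u0 j) * u t j \<and> sgn (u0 j) * u t j \<le> M)
          \<longrightarrow> sgn (u0 i) * u t i = \<delta> \<longrightarrow> sgn (u0 i) * AC_field n w r \<epsilon> (u t) i > 0"
    using AC_field_inward_lower[OF wg _ sgn1 bound] small assms(3,4,6) by blast
  show "\<forall>t>0. \<forall>i\<in>{1..n}. (\<forall>j\<in>{1..n}. \<delta> \<le> sgn (u0 j) * u t j \<and> sgn (u0 j) * u t j \<le> M)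
          \<longrightarrow> sgn (u0 i) * u t i = M \<longrightarrow> sgn (u0 i) * AC_field n w r \<epsilon> (u t) i < 0"
    using AC_field_inward_upper[OF wg _ sgn1 bound] assms(5,6) by blast
qed

lemma finite_nonzero_abs_bounds:
  fixes g :: "'i \<Rightarrow> real"
  assumes "finite I" "\<forall>j\<in>I. g j \<noteq> 0"
  obtains \<delta> M where "0 < \<delta>" "\<delta> \<le> 1/2" "1 < M" "\<forall>j\<in>I. \<delta> < \<bar>g j\<bar> \<and> \<bar>g j\<bar> < M"
proof
  define m where "m = Min (insert 1 ((\<lambda>j. \<bar>g j\<bar>) ` I))"
  have "0 < m" "m \<le> 1" "\<forall>j\<in>I. m \<le> \<bar>g j\<bar>" using assms unfolding m_def by auto
  then show "0 < m / 2" "m / 2 \<le> 1/2" "\<forall>j\<in>I. m / 2 < \<bar>g j\<bar> \<and> \<bar>g j\<bar> < 2 + (\<Sum>j\<in>I. \<bar>g j\<bar>)"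
    using member_le_sum[of _ I "\<lambda>j. \<bar>g j\<bar>"] assms(1) by fastforce+
  show "1 < 2 + (\<Sum>j\<in>I. \<bar>g j\<bar>)"
    using sum_abs_ge_zero[of g I] by linarith
qed

lemma sgn_eq_of_flipped_pos:
  fixes a b :: real
  assumes "0 < sgn a * b"
  shows "sgn b = sgn a"
  using assms by (cases a "0::real" rule: linorder_cases) (auto simp: zero_less_mult_iff)

theorem mainTheorem17:
  fixes n :: nat and w :: "nat \<Rightarrow> nat \<Rightarrow> real" and r :: real and u0 :: "nat \<Rightarrow> real"
  assumes "weighted_graph n w"
    and "0 \<le> r" and "r \<le> 1"
    and "\<forall>i\<in>{1..n}. u0 i \<noteq> 0"
  shows "\<exists>\<epsilon>0>0. \<forall>\<epsilon>. 0 < \<epsilon> \<and> \<epsilon> \<le> \<epsilon>0 \<longrightarrow>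
           (\<forall>u. is_AC_solution n w r \<epsilon> u0 u \<longrightarrow>
              (\<forall>i\<in>{1..n}. \<forall>t\<ge>0. sgn (u t i) = sgn (u0 i)))"
proof -
  obtain \<delta> M where \<delta>M: "0 < \<delta>" "\<delta> \<le> 1/2" "1 < M"
    and init: "\<forall>j\<in>{1..n}. \<delta> < \<bar>u0 j\<bar> \<and> \<bar>u0 j\<bar> < M"
    using finite_nonzero_abs_bounds[of "{1..n}" u0] assms(4) by blast
  define dmax where "dmax = Max (insert 1 (degree n w ` {1..n}))"
  have "1 \<le> dmax" "\<forall>i\<in>{1..n}. degree n w i \<le> dmax"
    unfolding dmax_def by (intro Max_ge ballI; simp)+
  then have dmax: "0 < dmax" "\<forall>i\<in>{1..n}. degree n w i \<le> dmax" by auto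
  define \<epsilon>0 where "\<epsilon>0 = \<delta> / (dmax * (\<delta> + M))"
  have "\<epsilon>0 > 0" unfolding \<epsilon>0_def using \<delta>M dmax by simp
  moreover have "\<forall>t\<ge>0. \<forall>i\<in>{1..n}. sgn (u t i) = sgn (u0 i)"
    if "0 < \<epsilon>" "\<epsilon> \<le> \<epsilon>0" "is_AC_solution n w r \<epsilon> u0 u" for \<epsilon> u
  proof -
    have "\<epsilon> * degree n w i * (\<delta> + M) \<le> \<delta>" if "i \<in> {1..n}" for i
    proof -
      have "\<epsilon> * degree n w i * (\<delta> + M) \<le> \<epsilon>0 * dmax * (\<delta> + M)"
        using \<open>0 < \<epsilon>\<close> \<open>\<epsilon> \<le> \<epsilon>0\<close> dmax that degree_pos[OF assms(1) that] \<delta>M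
        by (intro mult_mono) auto
      then show ?thesis unfolding \<epsilon>0_def using dmax \<delta>M by simp
    qed
    then have "\<forall>t\<ge>0. \<forall>j\<in>{1..n}. 0 < sgn (u0 j) * u t j"
      using AC_solution_trapped[OF assms(1) that(3) \<delta>M that(1) _ init] \<delta>M by fastforce
    then show ?thesis using sgn_eq_of_flipped_pos by blast
  qed
  ultimately show ?thesis by blast
qed

end
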